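(* Let $(TN,\mu)$ be a $T$-system. For a transition $t$ of $TN$ and a pre-place $q\in{}^\bullet t$ with $\mu(q)=0$ let $$en(TN,\mu)_q:=\{(\tau,\delta):\ \tau\in en(TN,\mu),\ \delta=(\tau,\dots,q,t)\subset TN \text{ an elementary path}\}.$$ (1) Let $t$ be a transition of $TN$ which is enabled at some marking reachable from $\mu$. Then for each pre-place $q\in{}^\bullet t$ with $\mu(q)=0$ there is a pair $(\tau,\delta)\in en(TN,\mu)_q$ with $\Vert\mu\Vert_\delta=0$. (2) Assume moreover that $(TN,\mu)$ is perpetual with regeneration cluster $cl$, and let $t_{cl}$ be the unique transition of $cl$. (i) For each transition $t$ of $TN$ having a pre-place $p\in{}^\bullet t$ with $\mu(p)=1$, and for each pre-place $q\in{}^\bullet t$ with $\mu(q)=0$, there is a pair $(\tau,\delta)\in en(TN,\mu)_q$ with $\Vert\mu\Vert_\delta=0$ and $t_{cl}\notin\delta_{seg}$, where $\delta_{seg}:=(\tau,\dots,q)$ is the segment of $\delta$ ending at $q$. (ii) Each elementary path $\delta\subset TN$ with $t_{cl}\notin\delta$ satisfies $\Vert\mu\Vert_\delta\le 1$.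
   Context: A net $N=(P,T,F)$: finite disjoint sets of places and transitions and edges $F\subset(P\times T)\cup(T\times P)$; nets are weakly connected. ${}^\bullet x$, $x^\bullet$ are pre-set and post-set. A $T$-net is a net in which every place has exactly one pre-transition and exactly one post-transition; a $T$-system is a pair $(TN,\mu)$ with $TN$ a $T$-net and $\mu$ a marking (a map from places to $\mathbb{N}$). A transition $t$ is enabled at $\mu$ if all places of ${}^\bullet t$ carry a token; firing removes one token from each pre-place and adds one to each post-place. $en(TN,\mu)$ is the set of transitions enabled at $\mu$; reachable markings are those obtained by firing finite sequences of successively enabled transitions. A path is a nonempty sequence of nodes $(x_1,\dots,x_n)$ with $(x_i,x_{i+1})\in F$; it is elementary if its nodes are pairwise distinct. For a set of nodes $X$ (e.g. the nodes of a path), $\Vert\mu\Vert_X=\sum_{p\in X\text{ place}}\mu(p)$. The cluster of a node $x$ is the smallest subnet containing $x$ containing $p^\bullet$ for each of its places $p$ and ${}^\bullet t$ for each of its transitions $t$; $\mu_{cl}$ is the marking equal to $1$ on the places of $cl$ and $0$ elsewhere. A Petri net $(N,\mu)$ is perpetual with regeneration cluster $cl$ if it is live and bounded and $\mu_{cl}$ is a home marking (reachable from every reachable marking). *)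

theory Defs
  imports Main
begin

definition net :: "'n set \<Rightarrow> 'n set \<Rightarrow> ('n \<times> 'n) set \<Rightarrow> bool" where
  "net P T F \<longleftrightarrow> finite P \<and> finite T \<and> P \<inter> T = {} \<and>
     F \<subseteq> (P \<times> T) \<union> (T \<times> P) \<and>
     (\<forall>x \<in> P \<union> T. \<forall>y \<in> P \<union> T. (x, y) \<in> (F \<union> F\<inverse>)\<^sup>*)"

definition preset :: "('n \<times> 'n) set \<Rightarrow> 'n \<Rightarrow> 'n set" where
  "preset F x = {y. (y, x) \<in> F}"

definition postset :: "('n \<times> 'n) set \<Rightarrow> 'n \<Rightarrow> 'n set" where
  "postset F x = {y. (x, y) \<in> F}"

definition tnet :: "'n set \<Rightarrow> 'n set \<Rightarrow> ('n \<times> 'n) set \<Rightarrow> bool" where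
  "tnet P T F \<longleftrightarrow> net P T F \<and>
     (\<forall>p \<in> P. card (preset F p) = 1 \<and> card (postset F p) = 1)"

definition marking :: "'n set \<Rightarrow> ('n \<Rightarrow> nat) \<Rightarrow> bool" where
  "marking P \<mu> \<longleftrightarrow> (\<forall>x. x \<notin> P \<longrightarrow> \<mu> x = 0)"

definition tsystem :: "'n set \<Rightarrow> 'n set \<Rightarrow> ('n \<times> 'n) set \<Rightarrow> ('n \<Rightarrow> nat) \<Rightarrow> bool" where
  "tsystem P T F \<mu> \<longleftrightarrow> tnet P T F \<and> marking P \<mu>"

definition enabled :: "'n set \<Rightarrow> ('n \<times> 'n) set \<Rightarrow> ('n \<Rightarrow> nat) \<Rightarrow> 'n \<Rightarrow> bool" where
  "enabled T F \<mu> t \<longleftrightarrow> t \<in> T \<and> (\<forall>p \<in> preset F t. \<mu> p \<ge> 1)"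

definition en :: "'n set \<Rightarrow> ('n \<times> 'n) set \<Rightarrow> ('n \<Rightarrow> nat) \<Rightarrow> 'n set" where
  "en T F \<mu> = {t. enabled T F \<mu> t}"

definition fire :: "('n \<times> 'n) set \<Rightarrow> ('n \<Rightarrow> nat) \<Rightarrow> 'n \<Rightarrow> ('n \<Rightarrow> nat)" where
  "fire F \<mu> t = (\<lambda>p. \<mu> p - (if (p, t) \<in> F then 1 else 0) + (if (t, p) \<in> F then 1 else 0))"

definition step :: "'n set \<Rightarrow> ('n \<times> 'n) set \<Rightarrow> ('n \<Rightarrow> nat) \<Rightarrow> ('n \<Rightarrow> nat) \<Rightarrow> bool" where
  "step T F \<mu> \<mu>' \<longleftrightarrow> (\<exists>t. enabled T F \<mu> t \<and> \<mu>' = fire F \<mu> t)"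

definition reach :: "'n set \<Rightarrow> ('n \<times> 'n) set \<Rightarrow> ('n \<Rightarrow> nat) \<Rightarrow> ('n \<Rightarrow> nat) \<Rightarrow> bool" where
  "reach T F = (step T F)\<^sup>*\<^sup>*"

definition live :: "'n set \<Rightarrow> ('n \<times> 'n) set \<Rightarrow> ('n \<Rightarrow> nat) \<Rightarrow> bool" where
  "live T F \<mu> \<longleftrightarrow> (\<forall>t \<in> T. \<forall>\<mu>'. reach T F \<mu> \<mu>' \<longrightarrow>
       (\<exists>\<mu>''. reach T F \<mu>' \<mu>'' \<and> enabled T F \<mu>'' t))"

definition bounded :: "'n set \<Rightarrow> 'n set \<Rightarrow> ('n \<times> 'n) set \<Rightarrow> ('n \<Rightarrow> nat) \<Rightarrow> bool" where
  "bounded P T F \<mu> \<longleftrightarrow> (\<exists>k. \<forall>\<mu>'. reach T F \<mu> \<mu>' \<longrightarrow> (\<forall>p \<in> P. \<mu>' p \<le> k))"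

definition home_marking :: "'n set \<Rightarrow> ('n \<times> 'n) set \<Rightarrow> ('n \<Rightarrow> nat) \<Rightarrow> ('n \<Rightarrow> nat) \<Rightarrow> bool" where
  "home_marking T F \<mu> \<nu> \<longleftrightarrow> (\<forall>\<mu>'. reach T F \<mu> \<mu>' \<longrightarrow> reach T F \<mu>' \<nu>)"

inductive_set cluster :: "'n set \<Rightarrow> 'n set \<Rightarrow> ('n \<times> 'n) set \<Rightarrow> 'n \<Rightarrow> 'n set"
  for P T F x where
  base: "x \<in> cluster P T F x"
| post: "p \<in> cluster P T F x \<Longrightarrow> p \<in> P \<Longrightarrow> (p, t) \<in> F \<Longrightarrow> t \<in> cluster P T F x"
| pre: "t \<in> cluster P T F x \<Longrightarrow> t \<in> T \<Longrightarrow> (p, t) \<in> F \<Longrightarrow> p \<in> cluster P T F x"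

definition is_cluster :: "'n set \<Rightarrow> 'n set \<Rightarrow> ('n \<times> 'n) set \<Rightarrow> 'n set \<Rightarrow> bool" where
  "is_cluster P T F cl \<longleftrightarrow> (\<exists>x \<in> P \<union> T. cl = cluster P T F x)"

definition mu_cl :: "'n set \<Rightarrow> 'n set \<Rightarrow> 'n \<Rightarrow> nat" where
  "mu_cl P cl = (\<lambda>x. if x \<in> P \<and> x \<in> cl then 1 else 0)"

definition perpetual :: "'n set \<Rightarrow> 'n set \<Rightarrow> ('n \<times> 'n) set \<Rightarrow> ('n \<Rightarrow> nat) \<Rightarrow> 'n set \<Rightarrow> bool" where
  "perpetual P T F \<mu> cl \<longleftrightarrow> is_cluster P T F cl \<and> live T F \<mu> \<and> bounded P T F \<mu> \<and>
      home_marking T F \<mu> (mu_cl P cl)"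

definition is_path :: "('n \<times> 'n) set \<Rightarrow> 'n list \<Rightarrow> bool" where
  "is_path F xs \<longleftrightarrow> xs \<noteq> [] \<and> (\<forall>i. Suc i < length xs \<longrightarrow> (xs ! i, xs ! Suc i) \<in> F)"

definition elem_path :: "('n \<times> 'n) set \<Rightarrow> 'n list \<Rightarrow> bool" where
  "elem_path F xs \<longleftrightarrow> is_path F xs \<and> distinct xs"

definition mnorm :: "'n set \<Rightarrow> ('n \<Rightarrow> nat) \<Rightarrow> 'n list \<Rightarrow> nat" where
  "mnorm P \<mu> xs = (\<Sum>p \<in> set xs \<inter> P. \<mu> p)"

definition en_q :: "'n set \<Rightarrow> ('n \<times> 'n) set \<Rightarrow> ('n \<Rightarrow> nat) \<Rightarrow> 'n \<Rightarrow> 'n \<Rightarrow> ('n \<times> 'n list) set" where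
  "en_q T F \<mu> q t = {(\<tau>, \<delta>). \<tau> \<in> en T F \<mu> \<and> elem_path F \<delta> \<and>
      length \<delta> \<ge> 2 \<and> hd \<delta> = \<tau> \<and> last \<delta> = t \<and> \<delta> ! (length \<delta> - 2) = q}"

end

theory Submission
  imports Defs
begin

text \<open>
  Part (1): search backwards from \<open>q\<close> along edges between unmarked nodes, avoiding \<open>t\<close>.
  If no enabled transition is reached, the places found form an unmarked siphon containing \<open>q\<close>:
  every transition feeding it is unmarked-reachable, hence disabled, hence has an unmarked input
  place that the search also finds (for \<open>t\<close> itself this input is \<open>q\<close>). An unmarked siphon stays
  unmarked, so \<open>t\<close> could never fire.

  Part (2): a live and bounded T-net is strongly connected, since a transition feeding a place
  from which its own predecessors cannot be reached could be fired to pump that place. In a T-net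
  the token count of a closed walk is invariant under firing, and at the home marking \<open>mu_cl\<close>
  only the input places of \<open>t\<^sub>c\<^sub>l\<close> are marked, so every closed walk carries as many tokens as
  it has visits of \<open>t\<^sub>c\<^sub>l\<close>. Closing an elementary path that avoids \<open>t\<^sub>c\<^sub>l\<close> by an elementary
  return path gives (ii). For (i) the search of part (1) also avoids \<open>t\<^sub>c\<^sub>l\<close>; the siphon argument
  can only fail if \<open>t\<^sub>c\<^sub>l\<close> feeds the places found, and then the closed walk formed by
  \<open>t\<^sub>c\<^sub>l\<close>, the unmarked path to \<open>t\<close> and a path from \<open>t\<close> back to \<open>t\<^sub>c\<^sub>l\<close> shows that this
  last path carries the single token, so prefixing the marked place \<open>p\<close> violates (ii).
\<close>

lemma is_path_iff_successively:
  "is_path F xs \<longleftrightarrow> xs \<noteq> [] \<and> successively (\<lambda>x y. (x, y) \<in> F) xs"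
  unfolding is_path_def successively_conv_nth by auto

lemma is_path_append:
  assumes "xs \<noteq> []" "ys \<noteq> []"
  shows "is_path F (xs @ ys) \<longleftrightarrow> is_path F xs \<and> is_path F ys \<and> (last xs, hd ys) \<in> F"
  using assms by (auto simp: is_path_iff_successively successively_append_iff)

lemma is_path_Cons:
  "is_path F (x # xs) \<longleftrightarrow> xs = [] \<or> (x, hd xs) \<in> F \<and> is_path F xs"
  by (auto simp: is_path_iff_successively successively_Cons)

lemma is_path_mono: "is_path F xs \<Longrightarrow> F \<subseteq> G \<Longrightarrow> is_path G xs"
  unfolding is_path_def by blast

lemma is_path_rtrancl_last:
  "is_path F xs \<Longrightarrow> z \<in> set xs \<Longrightarrow> (z, last xs) \<in> F\<^sup>*"
proof (induction xs arbitrary: z)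
  case (Cons x xs)
  show ?case
  proof (cases "xs = []")
    case False
    then have "(x, hd xs) \<in> F" "is_path F xs" using Cons.prems(1) by (auto simp: is_path_Cons)
    moreover have "(hd xs, last xs) \<in> F\<^sup>*" using Cons.IH[OF \<open>is_path F xs\<close>] False by simp
    ultimately show ?thesis
      using Cons.IH Cons.prems(2) False by (auto intro: converse_rtrancl_into_rtrancl)
  qed (use Cons.prems in simp)
qed simp

lemma is_path_set_Field:
  assumes "is_path F xs" "2 \<le> length xs"
  shows "set xs \<subseteq> Field F"
proof
  fix z assume "z \<in> set xs"
  then obtain i where i: "i < length xs" "xs ! i = z" by (meson in_set_conv_nth)
  show "z \<in> Field F"
  proof (cases "Suc i < length xs")
    case True
    then show ?thesis using assms(1) i unfolding is_path_def by (auto intro: FieldI1)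
  next
    case False
    then have "Suc (i - 1) = i" "Suc (i - 1) < length xs" using assms(2) i(1) by auto
    then have "(xs ! (i - 1), xs ! i) \<in> F" using assms(1) unfolding is_path_def by metis
    then show ?thesis using i(2) by (metis FieldI2)
  qed
qed

lemma rtrancl_imp_elem_path:
  assumes "(x, y) \<in> F\<^sup>*"
  shows "\<exists>xs. elem_path F xs \<and> hd xs = x \<and> last xs = y"
  using assms
proof (induction rule: converse_rtrancl_induct)
  case base
  show ?case by (intro exI[of _ "[y]"]) (simp add: elem_path_def is_path_def)
next
  case (step x z)
  then obtain ys where ys: "elem_path F ys" "hd ys = z" "last ys = y" by blast
  show ?case
  proof (cases "x \<in> set ys")
    case False
    then show ?thesis using ys step.hyps(1)
      by (intro exI[of _ "x # ys"]) (auto simp: elem_path_def is_path_Cons dest: is_path_def[THEN iffD1])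
  next
    case True
    then obtain as bs where ys_eq: "ys = as @ x # bs" by (meson split_list)
    moreover have "is_path F (x # bs)"
      using ys(1) ys_eq by (auto simp: elem_path_def is_path_iff_successively successively_append_iff)
    ultimately show ?thesis using ys by (intro exI[of _ "x # bs"]) (auto simp: elem_path_def)
  qed
qed

definition closed_walk :: "('n \<times> 'n) set \<Rightarrow> 'n list \<Rightarrow> bool" where
  "closed_walk F w \<longleftrightarrow> is_path F w \<and> (last w, hd w) \<in> F"

lemma closed_walk_edges:
  assumes "closed_walk F w"
  shows "set (zip w (rotate1 w)) \<subseteq> F"
proof
  fix e assume "e \<in> set (zip w (rotate1 w))"
  then obtain i where i: "i < length w" "e = (w ! i, w ! (Suc i mod length w))"
    by (auto simp: set_zip nth_rotate1)
  have edges: "w \<noteq> []" "(last w, hd w) \<in> F" "\<And>j. Suc j < length w \<Longrightarrow> (w ! j, w ! Suc j) \<in> F"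
    using assms unfolding closed_walk_def is_path_def by auto
  show "e \<in> F"
  proof (cases "Suc i < length w")
    case False
    then have "Suc i = length w" using i(1) by simp
    then have "i = length w - 1" "Suc i mod length w = 0" by auto
    then show ?thesis using i(2) edges by (simp add: last_conv_nth hd_conv_nth)
  qed (use i edges in simp)
qed

lemma sum_list_map_rotate1: "sum_list (map f (rotate1 xs)) = sum_list (map f xs)"
  for f :: "'a \<Rightarrow> 'b::comm_monoid_add"
  by (cases xs) (simp_all add: add.commute)

lemma sum_list_of_bool_eq_count_list:
  "sum_list (map (\<lambda>x. of_bool (x = y)) xs) = count_list xs y"
  by (induction xs) auto

lemma tnet_disjoint: "tnet P T F \<Longrightarrow> P \<inter> T = {}"
  unfolding tnet_def net_def by blast

lemma tnet_edge_cases: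
  "tnet P T F \<Longrightarrow> (a, b) \<in> F \<Longrightarrow> a \<in> P \<and> b \<in> T \<or> a \<in> T \<and> b \<in> P"
  unfolding tnet_def net_def by blast

lemma tnet_Field: "tnet P T F \<Longrightarrow> Field F \<subseteq> P \<union> T"
  by (auto simp: Field_def dest: tnet_edge_cases)

lemma tnet_edge_to_transition: "tnet P T F \<Longrightarrow> (a, b) \<in> F \<Longrightarrow> b \<in> T \<Longrightarrow> a \<in> P"
  using tnet_edge_cases[of P T F a b] tnet_disjoint[of P T F] by blast

lemma tnet_edge_from_transition: "tnet P T F \<Longrightarrow> (a, b) \<in> F \<Longrightarrow> a \<in> T \<Longrightarrow> b \<in> P"
  using tnet_edge_cases[of P T F a b] tnet_disjoint[of P T F] by blast

lemma tnet_place_succ: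
  assumes "tnet P T F" "p \<in> P"
  shows "\<exists>!t. (p, t) \<in> F"
proof -
  obtain z where "postset F p = {z}"
    using assms unfolding tnet_def by (auto simp: card_1_singleton_iff)
  then have "(p, t) \<in> F \<longleftrightarrow> t = z" for t unfolding postset_def by blast
  then show ?thesis by simp
qed

lemma tnet_place_pred:
  assumes "tnet P T F" "p \<in> P"
  shows "\<exists>!t. (t, p) \<in> F"
proof -
  obtain z where "preset F p = {z}"
    using assms unfolding tnet_def by (auto simp: card_1_singleton_iff)
  then have "(t, p) \<in> F \<longleftrightarrow> t = z" for t unfolding preset_def by blast
  then show ?thesis by simp
qed

lemma tnet_edge_into_transition_iff:
  assumes "tnet P T F" "(a, b) \<in> F" "u \<in> T"
  shows "(a, u) \<in> F \<longleftrightarrow> b = u"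
proof
  assume "(a, u) \<in> F"
  moreover have "a \<in> P" using tnet_edge_to_transition[OF assms(1) \<open>(a, u) \<in> F\<close> assms(3)] .
  ultimately show "b = u" using tnet_place_succ[OF assms(1)] assms(2) by blast
qed (use assms(2) in simp)

lemma tnet_edge_out_of_transition_iff:
  assumes "tnet P T F" "(a, b) \<in> F" "u \<in> T"
  shows "(u, b) \<in> F \<longleftrightarrow> a = u"
proof
  assume "(u, b) \<in> F"
  moreover have "b \<in> P" using tnet_edge_from_transition[OF assms(1) \<open>(u, b) \<in> F\<close> assms(3)] .
  ultimately show "a = u" using tnet_place_pred[OF assms(1)] assms(2) by blast
qed (use assms(2) in simp)

lemma tnet_closed_walk_count_pre:
  assumes "tnet P T F" "closed_walk F w" "u \<in> T"
  shows "sum_list (map (\<lambda>p. of_bool ((p, u) \<in> F)) w) = count_list w u"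
proof -
  let ?es = "zip w (rotate1 w)"
  have "map (\<lambda>p. of_bool ((p, u) \<in> F)) w = map ((\<lambda>p. of_bool ((p, u) \<in> F)) \<circ> fst) ?es"
    by (simp flip: map_map)
  also have "\<dots> = map ((\<lambda>b. of_bool (b = u)) \<circ> snd) ?es"
    using closed_walk_edges[OF assms(2)] tnet_edge_into_transition_iff[OF assms(1) _ assms(3)]
    by (intro map_cong) auto
  also have "\<dots> = map (\<lambda>b. of_bool (b = u)) (rotate1 w)"
    by (simp flip: map_map)
  finally show ?thesis by (metis sum_list_map_rotate1 sum_list_of_bool_eq_count_list)
qed

lemma tnet_closed_walk_count_post:
  assumes "tnet P T F" "closed_walk F w" "u \<in> T"
  shows "sum_list (map (\<lambda>p. of_bool ((u, p) \<in> F)) w) = count_list w u"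
proof -
  let ?es = "zip w (rotate1 w)"
  have "map (\<lambda>p. of_bool ((u, p) \<in> F)) (rotate1 w) = map ((\<lambda>p. of_bool ((u, p) \<in> F)) \<circ> snd) ?es"
    by (simp flip: map_map)
  also have "\<dots> = map ((\<lambda>a. of_bool (a = u)) \<circ> fst) ?es"
    using closed_walk_edges[OF assms(2)] tnet_edge_out_of_transition_iff[OF assms(1) _ assms(3)]
    by (intro map_cong) auto
  also have "\<dots> = map (\<lambda>a. of_bool (a = u)) w"
    by (simp flip: map_map)
  finally show ?thesis
    by (metis sum_list_map_rotate1 sum_list_of_bool_eq_count_list)
qed

section \<open>Token conservation on closed walks\<close>

lemma reach_trans: "reach T F \<mu> \<mu>' \<Longrightarrow> reach T F \<mu>' \<mu>'' \<Longrightarrow> reach T F \<mu> \<mu>''"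
  unfolding reach_def by (rule rtranclp_trans)

lemma reach_fire: "reach T F \<mu> \<mu>' \<Longrightarrow> enabled T F \<mu>' t \<Longrightarrow> reach T F \<mu> (fire F \<mu>' t)"
  unfolding reach_def step_def by (auto intro: rtranclp.rtrancl_into_rtrancl)

lemma tnet_fire_closed_walk_tokens:
  assumes "tnet P T F" "closed_walk F w" "enabled T F \<mu> u"
  shows "sum_list (map (fire F \<mu> u) w) = sum_list (map \<mu> w)"
proof -
  have u: "u \<in> T" using assms(3) unfolding enabled_def by simp
  have "fire F \<mu> u p + of_bool ((p, u) \<in> F) = \<mu> p + of_bool ((u, p) \<in> F)" for p
    using assms(3) unfolding fire_def enabled_def preset_def by auto
  then have "sum_list (map (fire F \<mu> u) w) + sum_list (map (\<lambda>p. of_bool ((p, u) \<in> F)) w)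
      = sum_list (map \<mu> w) + sum_list (map (\<lambda>p. of_bool ((u, p) \<in> F)) w)"
    by (simp flip: sum_list_addf)
  then show ?thesis
    using tnet_closed_walk_count_pre[OF assms(1,2) u] tnet_closed_walk_count_post[OF assms(1,2) u]
    by simp
qed

lemma tnet_reach_closed_walk_tokens:
  assumes "tnet P T F" "closed_walk F w" "reach T F \<mu> \<mu>'"
  shows "sum_list (map \<mu>' w) = sum_list (map \<mu> w)"
  using assms(3) unfolding reach_def
proof (induction rule: rtranclp_induct)
  case (step \<mu>1 \<mu>2)
  then obtain u where "enabled T F \<mu>1 u" "\<mu>2 = fire F \<mu>1 u" unfolding step_def by blast
  then show ?case using tnet_fire_closed_walk_tokens[OF assms(1,2)] step.IH by simp
qed simp

lemma mnorm_eq_sum_list: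
  assumes "marking P \<mu>" "distinct \<delta>"
  shows "mnorm P \<mu> \<delta> = sum_list (map \<mu> \<delta>)"
proof -
  have "mnorm P \<mu> \<delta> = sum \<mu> (set \<delta>)"
    unfolding mnorm_def using assms(1)
    by (intro sum.mono_neutral_left) (auto simp: marking_def)
  then show ?thesis using assms(2) by (simp add: sum_list_distinct_conv_sum_set)
qed

section \<open>Unmarked siphons\<close>

definition siphon :: "('n \<times> 'n) set \<Rightarrow> 'n set \<Rightarrow> bool" where
  "siphon F S \<longleftrightarrow> (\<forall>s\<in>S. \<forall>v. (v, s) \<in> F \<longrightarrow> (\<exists>s'\<in>S. (s', v) \<in> F))"

lemma siphon_unmarked_reach:
  assumes "siphon F S" "\<forall>s\<in>S. \<mu> s = 0" "reach T F \<mu> \<mu>'"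
  shows "\<forall>s\<in>S. \<mu>' s = 0"
  using assms(3) unfolding reach_def
proof (induction rule: rtranclp_induct)
  case (step \<mu>1 \<mu>2)
  then obtain u where u: "enabled T F \<mu>1 u" "\<mu>2 = fire F \<mu>1 u" unfolding step_def by blast
  have "(u, s) \<notin> F" if "s \<in> S" for s
    using assms(1) that u(1) step.IH unfolding siphon_def enabled_def preset_def by fastforce
  then show ?case using u(2) step.IH unfolding fire_def by simp
qed (use assms(2) in simp)

lemma unmarked_siphon_disables:
  assumes "siphon F S" "\<forall>s\<in>S. \<mu> s = 0" "q \<in> S" "(q, t) \<in> F" "reach T F \<mu> \<mu>'"
  shows "\<not> enabled T F \<mu>' t"
  using siphon_unmarked_reach[OF assms(1,2,5)] assms(3,4) unfolding enabled_def preset_def by force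

definition unmarked_edges :: "('n \<times> 'n) set \<Rightarrow> ('n \<Rightarrow> nat) \<Rightarrow> 'n set \<Rightarrow> ('n \<times> 'n) set" where
  "unmarked_edges F \<mu> X = {(a, b) \<in> F. a \<notin> X \<and> b \<notin> X \<and> \<mu> a = 0 \<and> \<mu> b = 0}"

lemma unmarked_edges_rtrancl:
  assumes "(z, q) \<in> (unmarked_edges F \<mu> X)\<^sup>*" "\<mu> q = 0" "q \<notin> X"
  shows "\<mu> z = 0 \<and> z \<notin> X"
  using assms by (cases rule: converse_rtranclE) (auto simp: unmarked_edges_def)

lemma en_q_of_unmarked_rtrancl:
  assumes tn: "tnet P T F" and mk: "marking P \<mu>" and en: "enabled T F \<mu> \<tau>"
    and \<tau>q: "(\<tau>, q) \<in> (unmarked_edges F \<mu> X)\<^sup>*" and qt: "(q, t) \<in> F"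
    and q: "\<mu> q = 0" "q \<notin> X" and t: "t \<in> X" "t \<in> T"
  shows "\<exists>\<delta>. (\<tau>, \<delta>) \<in> en_q T F \<mu> q t \<and> mnorm P \<mu> \<delta> = 0 \<and> set (butlast \<delta>) \<inter> X = {}"
proof -
  obtain \<rho> where \<rho>: "elem_path (unmarked_edges F \<mu> X) \<rho>" "hd \<rho> = \<tau>" "last \<rho> = q"
    using rtrancl_imp_elem_path[OF \<tau>q] by blast
  have \<rho>F: "is_path F \<rho>" and \<rho>ne: "\<rho> \<noteq> []"
    using \<rho>(1) is_path_mono[of _ \<rho> F] unfolding elem_path_def is_path_def
    by (auto simp: unmarked_edges_def)
  have \<rho>_nodes: "\<mu> z = 0 \<and> z \<notin> X" if "z \<in> set \<rho>" for z
    using unmarked_edges_rtrancl[of _ q F \<mu> X, OF _ q] is_path_rtrancl_last[OF _ that] \<rho>(1,3)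
    unfolding elem_path_def by blast
  define \<delta> where "\<delta> = \<rho> @ [t]"
  have "is_path F \<delta>" using \<rho>F \<rho>ne \<rho>(3) qt by (simp add: \<delta>_def is_path_append is_path_Cons)
  moreover have "distinct \<delta>" using \<rho>(1) \<rho>_nodes t(1) by (auto simp: \<delta>_def elem_path_def)
  ultimately have "elem_path F \<delta>" by (simp add: elem_path_def)
  moreover have "\<delta> ! (length \<delta> - 2) = q"
    using \<rho>ne \<rho>(3) by (simp add: \<delta>_def nth_append last_conv_nth)
  moreover have "\<mu> t = 0"
    using mk t(2) tnet_disjoint[OF tn] unfolding marking_def by blast
  then have "mnorm P \<mu> \<delta> = 0"
    using mnorm_eq_sum_list[OF mk] \<open>elem_path F \<delta>\<close> \<rho>_nodes
    by (auto simp: \<delta>_def elem_path_def sum_list_eq_0_iff)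
  ultimately show ?thesis
    using en \<rho>ne \<rho>(2) \<rho>_nodes unfolding en_q_def en_def
    by (intro exI[of _ \<delta>]) (auto simp: \<delta>_def Suc_le_eq)
qed

lemma unmarked_backward_set_siphon:
  assumes tn: "tnet P T F" and mk: "marking P \<mu>" and X: "X \<subseteq> T"
    and q: "q \<in> P" "\<mu> q = 0"
    and no_start: "\<forall>\<tau>. (\<tau>, q) \<in> (unmarked_edges F \<mu> X)\<^sup>* \<longrightarrow> \<not> enabled T F \<mu> \<tau>"
    and S: "S = {s \<in> P. (s, q) \<in> (unmarked_edges F \<mu> X)\<^sup>*}"
    and X_feeders: "\<And>v s. v \<in> X \<Longrightarrow> s \<in> S \<Longrightarrow> (v, s) \<in> F \<Longrightarrow> \<exists>s'\<in>S. (s', v) \<in> F"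
  shows "siphon F S"
  unfolding siphon_def
proof (intro ballI allI impI)
  fix s v assume s: "s \<in> S" and vs: "(v, s) \<in> F"
  show "\<exists>s'\<in>S. (s', v) \<in> F"
  proof (cases "v \<in> X")
    case False
    let ?E = "unmarked_edges F \<mu> X"
    have qX: "q \<notin> X" using q(1) X tnet_disjoint[OF tn] by blast
    have sq: "(s, q) \<in> ?E\<^sup>*" and sP: "s \<in> P" using s unfolding S by auto
    have vT: "v \<in> T" using tnet_edge_cases[OF tn vs] sP tnet_disjoint[OF tn] by blast
    then have "\<mu> v = 0" using mk tnet_disjoint[OF tn] unfolding marking_def by blast
    then have "(v, s) \<in> ?E"
      using vs False unmarked_edges_rtrancl[OF sq q(2) qX] by (simp add: unmarked_edges_def)
    then have vq: "(v, q) \<in> ?E\<^sup>*" using sq by (rule converse_rtrancl_into_rtrancl)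
    then have "\<not> enabled T F \<mu> v" using no_start by blast
    then obtain s' where s': "(s', v) \<in> F" "\<mu> s' = 0"
      using vT unfolding enabled_def preset_def by auto
    have s'P: "s' \<in> P" using tnet_edge_to_transition[OF tn s'(1) vT] .
    then have "(s', v) \<in> ?E"
      using s' False \<open>\<mu> v = 0\<close> X tnet_disjoint[OF tn] by (auto simp: unmarked_edges_def)
    then have "s' \<in> S" using vq s'P unfolding S by (auto intro: converse_rtrancl_into_rtrancl)
    then show ?thesis using s'(1) by blast
  qed (use X_feeders s vs in blast)
qed

lemma reach_enabled_unmarked_en_q:
  assumes sys: "tsystem P T F \<mu>" and X: "X \<subseteq> T" "t \<in> X" and qt: "(q, t) \<in> F" and q: "\<mu> q = 0"
    and r: "reach T F \<mu> \<mu>'" and en: "enabled T F \<mu>' t"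
    and no_feeders: "\<And>v s. v \<in> X \<Longrightarrow> v \<noteq> t \<Longrightarrow> (v, s) \<in> F \<Longrightarrow>
      (s, q) \<notin> (unmarked_edges F \<mu> X)\<^sup>*"
  shows "\<exists>\<tau> \<delta>. (\<tau>, \<delta>) \<in> en_q T F \<mu> q t \<and> mnorm P \<mu> \<delta> = 0 \<and> set (butlast \<delta>) \<inter> X = {}"
proof -
  have tn: "tnet P T F" and mk: "marking P \<mu>" using sys unfolding tsystem_def by auto
  have tT: "t \<in> T" using X by blast
  have qP: "q \<in> P" using tnet_edge_to_transition[OF tn qt tT] .
  have qX: "q \<notin> X" using qP X(1) tnet_disjoint[OF tn] by blast
  let ?E = "unmarked_edges F \<mu> X"
  define S where "S = {s \<in> P. (s, q) \<in> ?E\<^sup>*}"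
  have qS: "q \<in> S" using qP unfolding S_def by simp
  have "\<exists>\<tau>. (\<tau>, q) \<in> ?E\<^sup>* \<and> enabled T F \<mu> \<tau>"
  proof (rule ccontr)
    assume no_start: "\<nexists>\<tau>. (\<tau>, q) \<in> ?E\<^sup>* \<and> enabled T F \<mu> \<tau>"
    have "siphon F S"
    proof (rule unmarked_backward_set_siphon[OF tn mk X(1) qP q _ S_def])
      fix v s assume "v \<in> X" "s \<in> S" "(v, s) \<in> F"
      moreover have "(s, q) \<in> ?E\<^sup>*" using \<open>s \<in> S\<close> unfolding S_def by simp
      ultimately have "v = t" using no_feeders by metis
      then show "\<exists>s'\<in>S. (s', v) \<in> F" using qS qt by blast
    qed (use no_start in blast)
    moreover have "\<forall>s\<in>S. \<mu> s = 0"
      unfolding S_def using unmarked_edges_rtrancl[of _ q F \<mu> X, OF _ q qX] by simp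
    ultimately have "\<not> enabled T F \<mu>' t" by (rule unmarked_siphon_disables[OF _ _ qS qt r])
    then show False using en by contradiction
  qed
  then obtain \<tau> where "(\<tau>, q) \<in> ?E\<^sup>*" "enabled T F \<mu> \<tau>" by blast
  then show ?thesis using en_q_of_unmarked_rtrancl[OF tn mk _ _ qt q qX X(2) tT] by blast
qed

section \<open>Live and bounded T-nets are strongly connected\<close>

text \<open>
  Replaying only the firings of transitions in the predecessor-closed set \<open>U\<close> keeps them enabled,
  since \<open>U\<close> contains all their input places, and none of them consumes a token from \<open>s\<close>.
\<close>

lemma pred_closed_reach_simulation:
  assumes pred_closed: "F\<inverse> `` U \<subseteq> U" and s_out: "F `` {s} \<inter> U = {}"
    and r: "reach T F m m'" and le: "\<forall>y\<in>U. m y \<le> n y"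
  shows "\<exists>n'. reach T F n n' \<and> (\<forall>y\<in>U. m' y \<le> n' y) \<and> n s \<le> n' s"
  using r[unfolded reach_def]
proof (induction rule: rtranclp_induct)
  case (step m1 m2)
  obtain n1 where n1: "reach T F n n1" "\<forall>y\<in>U. m1 y \<le> n1 y" "n s \<le> n1 s"
    using step.IH by blast
  obtain u where u: "enabled T F m1 u" "m2 = fire F m1 u" using step.hyps(2) unfolding step_def by blast
  show ?case
  proof (cases "u \<in> U")
    case True
    then have "enabled T F n1 u"
      using u(1) n1(2) pred_closed unfolding enabled_def preset_def by (blast intro: le_trans)
    then have "reach T F n (fire F n1 u)" by (rule reach_fire[OF n1(1)])
    moreover have "\<forall>y\<in>U. m2 y \<le> fire F n1 u y"
      using n1(2) u(2) unfolding fire_def by (auto intro: diff_le_mono)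
    moreover have "(s, u) \<notin> F" using s_out True by blast
    then have "n s \<le> fire F n1 u s" using n1(3) unfolding fire_def by auto
    ultimately show ?thesis by blast
  next
    case False
    then have "\<forall>y\<in>U. (u, y) \<notin> F" using pred_closed by blast
    then have "\<forall>y\<in>U. m2 y \<le> n1 y" using n1(2) u(2) unfolding fire_def by fastforce
    then show ?thesis using n1(1,3) by blast
  qed
qed (use le in \<open>auto simp: reach_def\<close>)

lemma live_pumps_output_place:
  assumes live: "live T F \<mu>"
    and pred_closed: "F\<inverse> `` U \<subseteq> U" and s_out: "F `` {s} \<inter> U = {}"
    and w: "w \<in> U" "w \<in> T" "(w, s) \<in> F"
  shows "\<exists>m. reach T F \<mu> m \<and> k \<le> m s"
proof (induction k)
  case 0
  show ?case by (auto simp: reach_def)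
next
  case (Suc k)
  then obtain m where m: "reach T F \<mu> m" "k \<le> m s" by blast
  obtain m1 where m1: "reach T F m m1" "enabled T F m1 w"
    using live w(2) m(1) unfolding live_def by blast
  obtain n1 where n1: "reach T F m n1" "\<forall>y\<in>U. m1 y \<le> n1 y" "m s \<le> n1 s"
    using pred_closed_reach_simulation[OF pred_closed s_out m1(1)] by blast
  have "enabled T F n1 w"
    using m1(2) n1(2) pred_closed w(1) unfolding enabled_def preset_def by (blast intro: le_trans)
  then have "reach T F \<mu> (fire F n1 w)" by (rule reach_fire[OF reach_trans[OF m(1) n1(1)]])
  moreover have "(s, w) \<notin> F" using s_out w(1) by blast
  then have "fire F n1 w s = Suc (n1 s)" using w(3) unfolding fire_def by auto
  ultimately show ?case using m(2) n1(3) by (intro exI[of _ "fire F n1 w"]) auto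
qed

lemma rtrancl_exit_edge:
  "(x, y) \<in> R\<^sup>* \<Longrightarrow> x \<in> U \<Longrightarrow> y \<notin> U \<Longrightarrow> \<exists>a b. (a, b) \<in> R \<and> a \<in> U \<and> b \<notin> U"
  by (induction rule: rtrancl_induct) auto

definition strongly_connected :: "'n set \<Rightarrow> ('n \<times> 'n) set \<Rightarrow> bool" where
  "strongly_connected N F \<longleftrightarrow> (\<forall>x\<in>N. \<forall>y\<in>N. (x, y) \<in> F\<^sup>*)"

lemma strongly_connectedD: "strongly_connected N F \<Longrightarrow> x \<in> N \<Longrightarrow> y \<in> N \<Longrightarrow> (x, y) \<in> F\<^sup>*"
  unfolding strongly_connected_def by blast

lemma live_bounded_tnet_strongly_connected:
  assumes tn: "tnet P T F" and live: "live T F \<mu>" and bd: "bounded P T F \<mu>"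
  shows "strongly_connected (P \<union> T) F"
  unfolding strongly_connected_def
proof (intro ballI, rule ccontr)
  fix x y assume x: "x \<in> P \<union> T" and y: "y \<in> P \<union> T" and xy: "(x, y) \<notin> F\<^sup>*"
  define U where "U = {z. (z, y) \<in> F\<^sup>*}"
  have pred_closed: "F\<inverse> `` U \<subseteq> U"
    unfolding U_def by (auto intro: converse_rtrancl_into_rtrancl)
  have "(y, x) \<in> (F \<union> F\<inverse>)\<^sup>*" using tn x y unfolding tnet_def net_def by blast
  moreover have "y \<in> U" "x \<notin> U" using xy unfolding U_def by auto
  ultimately obtain a b where "(a, b) \<in> F \<union> F\<inverse>" "a \<in> U" "b \<notin> U"
    using rtrancl_exit_edge by metis
  then have ab: "(a, b) \<in> F" "a \<in> U" "b \<notin> U" using pred_closed by blast+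
  obtain w s where ws: "w \<in> U" "w \<in> T" "(w, s) \<in> F" "s \<in> P" "F `` {s} \<inter> U = {}"
  proof (cases "a \<in> T")
    case True
    then show ?thesis
      using that[of a b] ab pred_closed tnet_edge_from_transition[OF tn ab(1)] by blast
  next
    case False
    then have aP: "a \<in> P" using tnet_edge_cases[OF tn ab(1)] by blast
    then obtain w where "(w, a) \<in> F" using tnet_place_pred[OF tn] by blast
    moreover have "F `` {a} \<inter> U = {}" using tnet_place_succ[OF tn aP] ab by blast
    ultimately show ?thesis
      using that[of w a] ab(2) aP pred_closed tnet_edge_cases[OF tn] tnet_disjoint[OF tn] by blast
  qed
  obtain K where "\<forall>m. reach T F \<mu> m \<longrightarrow> (\<forall>p\<in>P. m p \<le> K)"
    using bd unfolding bounded_def by blast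
  then show False
    using live_pumps_output_place[OF live pred_closed ws(5) ws(1-3), of "Suc K"] ws(4)
    by (meson Suc_n_not_le_n le_trans)
qed

lemma strongly_connected_tnet_neighbours:
  assumes tn: "tnet P T F" and sc: "strongly_connected (P \<union> T) F" and "P \<noteq> {}"
    and x: "x \<in> P \<union> T"
  shows "\<exists>u. (u, x) \<in> F" "\<exists>v. (x, v) \<in> F"
proof -
  obtain y where y: "y \<in> P \<union> T" "y \<noteq> x"
  proof (cases "x \<in> P")
    case True
    then obtain t where "(x, t) \<in> F" using tnet_place_succ[OF tn] by blast
    then show ?thesis
      using that True tnet_edge_cases[OF tn] tnet_disjoint[OF tn] by blast
  next
    case False
    then show ?thesis using that \<open>P \<noteq> {}\<close> by blast
  qed
  have "(y, x) \<in> F\<^sup>*" "(x, y) \<in> F\<^sup>*" using strongly_connectedD[OF sc] x y(1) by blast+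
  then show "\<exists>u. (u, x) \<in> F" "\<exists>v. (x, v) \<in> F"
    using y(2) by (auto elim: rtranclE converse_rtranclE)
qed

section \<open>Perpetual T-systems\<close>

lemma tnet_cluster_places:
  assumes tn: "tnet P T F" and cl: "is_cluster P T F cl" and tcl: "tcl \<in> T" "tcl \<in> cl"
  shows "cl \<inter> P = preset F tcl"
proof -
  obtain x where x: "x \<in> P \<union> T" "cl = cluster P T F x" using cl unfolding is_cluster_def by blast
  obtain t where t: "t \<in> T" "x = t \<or> (x, t) \<in> F"
  proof (cases "x \<in> T")
    case False
    then have "x \<in> P" using x(1) by blast
    then obtain t where "(x, t) \<in> F" using tnet_place_succ[OF tn] by blast
    then show ?thesis using that tnet_edge_cases[OF tn] False by blast
  qed (use that in blast)
  have cluster_nodes: "y = t \<or> (y, t) \<in> F" if "y \<in> cluster P T F x" for y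
    using that
  proof (induction rule: cluster.induct)
    case (post p u)
    then have "(p, t) \<in> F" using t(1) tnet_disjoint[OF tn] by blast
    then show ?case using tnet_place_succ[OF tn post.hyps(2)] post.hyps(3) by blast
  next
    case (pre u p)
    have "(u, t) \<notin> F" using tnet_edge_from_transition[OF tn _ pre.hyps(2)] t(1) tnet_disjoint[OF tn] by blast
    then show ?case using pre.IH pre.hyps(3) by blast
  qed (use t in blast)
  have "tcl = t"
    using cluster_nodes[of tcl] tcl x(2) tnet_edge_from_transition[OF tn _ tcl(1)] t(1)
      tnet_disjoint[OF tn] by blast
  show ?thesis
  proof
    show "cl \<inter> P \<subseteq> preset F tcl"
      using cluster_nodes x(2) \<open>tcl = t\<close> t(1) tnet_disjoint[OF tn] unfolding preset_def by blast
    show "preset F tcl \<subseteq> cl \<inter> P"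
      using cluster.pre[of tcl P T F x] tcl x(2) tnet_edge_to_transition[OF tn _ tcl(1)]
      unfolding preset_def by blast
  qed
qed

lemma perpetual_closed_walk_tokens:
  assumes tn: "tnet P T F" and pp: "perpetual P T F \<mu> cl" and tcl: "tcl \<in> T" "tcl \<in> cl"
    and w: "closed_walk F w"
  shows "sum_list (map \<mu> w) = count_list w tcl"
proof -
  have cl: "is_cluster P T F cl" and "home_marking T F \<mu> (mu_cl P cl)"
    using pp unfolding perpetual_def by auto
  then have "reach T F \<mu> (mu_cl P cl)" unfolding home_marking_def reach_def by blast
  then have "sum_list (map \<mu> w) = sum_list (map (mu_cl P cl) w)"
    using tnet_reach_closed_walk_tokens[OF tn w] by simp
  also have "mu_cl P cl = (\<lambda>p. of_bool ((p, tcl) \<in> F))"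
    using tnet_cluster_places[OF tn cl tcl] unfolding mu_cl_def preset_def by (auto simp: fun_eq_iff)
  finally show ?thesis using tnet_closed_walk_count_pre[OF tn w tcl(1)] by simp
qed

lemma count_list_distinct_le_1: "distinct xs \<Longrightarrow> count_list xs x \<le> 1"
  by (induction xs) auto

lemma perpetual_elem_path_mnorm_le_1:
  assumes sys: "tsystem P T F \<mu>" and pp: "perpetual P T F \<mu> cl" and tcl: "tcl \<in> T" "tcl \<in> cl"
    and \<delta>: "elem_path F \<delta>" "tcl \<notin> set \<delta>"
  shows "mnorm P \<mu> \<delta> \<le> 1"
proof -
  have tn: "tnet P T F" and mk: "marking P \<mu>" using sys unfolding tsystem_def by auto
  have \<delta>F: "is_path F \<delta>" "distinct \<delta>" using \<delta>(1) unfolding elem_path_def by auto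
  have norm: "mnorm P \<mu> \<delta> = sum_list (map \<mu> \<delta>)" using mnorm_eq_sum_list[OF mk \<delta>F(2)] .
  show ?thesis
  proof (cases "sum_list (map \<mu> \<delta>) = 0")
    case False
    then have "\<exists>p\<in>set \<delta>. \<mu> p \<noteq> 0" by (simp add: sum_list_eq_0_iff)
    then obtain p where p: "p \<in> set \<delta>" "\<mu> p \<noteq> 0" by blast
    then have pP: "p \<in> P" using mk unfolding marking_def by auto
    have nodes: "set \<delta> \<subseteq> P \<union> T"
    proof (cases "2 \<le> length \<delta>")
      case True
      then show ?thesis using is_path_set_Field[OF \<delta>F(1)] tnet_Field[OF tn] by blast
    next
      case False
      then have "\<delta> = [p]" using p(1) \<delta>F(1) unfolding is_path_def by (cases \<delta>) (auto simp: Suc_le_eq)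
      then show ?thesis using pP by simp
    qed
    have \<delta>ne: "\<delta> \<noteq> []" using \<delta>F(1) unfolding is_path_def by simp
    have sc: "strongly_connected (P \<union> T) F"
      using live_bounded_tnet_strongly_connected[OF tn] pp unfolding perpetual_def by blast
    have ends: "P \<noteq> {}" "hd \<delta> \<in> P \<union> T" "last \<delta> \<in> P \<union> T"
      using pP nodes \<delta>ne hd_in_set last_in_set by blast+
    obtain u where u: "(u, hd \<delta>) \<in> F"
      using strongly_connected_tnet_neighbours(1)[OF tn sc ends(1,2)] by blast
    obtain v where v: "(last \<delta>, v) \<in> F"
      using strongly_connected_tnet_neighbours(2)[OF tn sc ends(1,3)] by blast
    have "u \<in> P \<union> T" "v \<in> P \<union> T"
      using FieldI1[OF u] FieldI2[OF v] tnet_Field[OF tn] by blast+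
    then obtain \<rho> where \<rho>: "elem_path F \<rho>" "hd \<rho> = v" "last \<rho> = u"
      using rtrancl_imp_elem_path[OF strongly_connectedD[OF sc]] by blast
    have \<rho>F: "is_path F \<rho>" "distinct \<rho>" "\<rho> \<noteq> []" using \<rho>(1) unfolding elem_path_def is_path_def by auto
    have "closed_walk F (\<delta> @ \<rho>)"
      unfolding closed_walk_def using \<delta>F(1) \<rho>F \<rho>(2,3) u v \<delta>ne by (simp add: is_path_append)
    then have "sum_list (map \<mu> (\<delta> @ \<rho>)) = count_list (\<delta> @ \<rho>) tcl"
      by (rule perpetual_closed_walk_tokens[OF tn pp tcl])
    also have "\<dots> = count_list \<rho> tcl" using \<delta>(2) by simp
    finally show ?thesis using norm count_list_distinct_le_1[OF \<rho>F(2), of tcl] by simp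
  qed (use norm in linarith)
qed

lemma strongly_connected_elem_path_from_place:
  assumes tn: "tnet P T F" and sc: "strongly_connected (P \<union> T) F"
    and p: "p \<in> P" "(p, t) \<in> F" and y: "y \<in> T" "y \<noteq> t"
  shows "\<exists>\<beta>. elem_path F (p # \<beta> @ [y]) \<and> \<beta> \<noteq> [] \<and> hd \<beta> = t"
proof -
  have "p \<noteq> y" using p(1) y(1) tnet_disjoint[OF tn] by blast
  obtain \<gamma> where \<gamma>: "elem_path F \<gamma>" "hd \<gamma> = p" "last \<gamma> = y"
    using rtrancl_imp_elem_path[OF strongly_connectedD[OF sc]] p(1) y(1) by blast
  obtain \<beta> where \<gamma>_eq: "\<gamma> = p # \<beta> @ [y]"
  proof -
    obtain \<gamma>' where "\<gamma> = p # \<gamma>'" using \<gamma>(1,2) unfolding elem_path_def is_path_def by (cases \<gamma>) auto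
    moreover have "\<gamma>' \<noteq> []" using \<gamma>(3) \<open>p \<noteq> y\<close> calculation by auto
    ultimately show ?thesis using that[of "butlast \<gamma>'"] \<gamma>(3) by (metis append_butlast_last_id last.simps)
  qed
  have p_succ: "(p, u) \<in> F \<longleftrightarrow> u = t" for u using tnet_place_succ[OF tn p(1)] p(2) by blast
  have p\<beta>: "is_path F (p # \<beta>)" "(last (p # \<beta>), y) \<in> F"
    using \<gamma>(1) \<gamma>_eq is_path_append[of "p # \<beta>" "[y]"] unfolding elem_path_def by auto
  have "\<beta> \<noteq> []"
  proof
    assume "\<beta> = []"
    then have "(p, y) \<in> F" using p\<beta>(2) by simp
    then show False using p_succ y(2) by blast
  qed
  then have "hd \<beta> = t" using p\<beta>(1) p_succ by (simp add: is_path_Cons)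
  moreover have "elem_path F (p # \<beta> @ [y])" using \<gamma>(1) \<gamma>_eq by simp
  ultimately show ?thesis using \<open>\<beta> \<noteq> []\<close> by blast
qed

lemma perpetual_pre_place_le_tokens_from_tcl:
  assumes sys: "tsystem P T F \<mu>" and pp: "perpetual P T F \<mu> cl" and tcl: "tcl \<in> T" "tcl \<in> cl"
    and \<sigma>: "is_path F (tcl # \<sigma> @ [t])" "tcl \<notin> set \<sigma>"
    and t: "t \<in> T" "t \<noteq> tcl" and pt: "(p, t) \<in> F"
  shows "\<mu> p \<le> sum_list (map \<mu> \<sigma>)"
proof -
  have tn: "tnet P T F" and mk: "marking P \<mu>" using sys unfolding tsystem_def by auto
  have pP: "p \<in> P" using tnet_edge_to_transition[OF tn pt t(1)] .
  have sc: "strongly_connected (P \<union> T) F"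
    using live_bounded_tnet_strongly_connected[OF tn] pp unfolding perpetual_def by blast
  obtain \<beta> where \<beta>: "elem_path F (p # \<beta> @ [tcl])" "\<beta> \<noteq> []" "hd \<beta> = t"
    using strongly_connected_elem_path_from_place[OF tn sc pP pt tcl(1) t(2)[symmetric]] by blast
  have \<beta>_path: "is_path F (p # \<beta>)" "(last \<beta>, tcl) \<in> F" "distinct (p # \<beta> @ [tcl])"
    using \<beta>(1,2) is_path_append[of "p # \<beta>" "[tcl]"] unfolding elem_path_def by auto
  have \<sigma>_path: "is_path F (tcl # \<sigma>)" "(last (tcl # \<sigma>), t) \<in> F"
    using \<sigma>(1) is_path_append[of "tcl # \<sigma>" "[t]"] by (auto simp: is_path_def)
  have "closed_walk F (tcl # \<sigma> @ \<beta>)"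
    unfolding closed_walk_def using \<sigma>_path \<beta>(2,3) \<beta>_path(1,2)
    by (simp add: is_path_append[of "tcl # \<sigma>" \<beta>, simplified] is_path_Cons[of F p \<beta>])
  then have "sum_list (map \<mu> (tcl # \<sigma> @ \<beta>)) = count_list (tcl # \<sigma> @ \<beta>) tcl"
    by (rule perpetual_closed_walk_tokens[OF tn pp tcl])
  moreover have "\<mu> tcl = 0" using mk tcl(1) tnet_disjoint[OF tn] unfolding marking_def by blast
  moreover have "tcl \<notin> set (p # \<beta>)" using \<beta>_path(3) by auto
  ultimately have circuit: "sum_list (map \<mu> \<sigma>) + sum_list (map \<mu> \<beta>) = 1" using \<sigma>(2) by simp
  have "elem_path F (p # \<beta>)" using \<beta>_path unfolding elem_path_def by simp
  then have "mnorm P \<mu> (p # \<beta>) \<le> 1"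
    using perpetual_elem_path_mnorm_le_1[OF sys pp tcl] \<open>tcl \<notin> set (p # \<beta>)\<close> by blast
  then have "\<mu> p + sum_list (map \<mu> \<beta>) \<le> 1"
    using mnorm_eq_sum_list[OF mk] \<beta>_path(3) by simp
  then show ?thesis using circuit by linarith
qed

lemma perpetual_no_unmarked_path_from_tcl:
  assumes sys: "tsystem P T F \<mu>" and pp: "perpetual P T F \<mu> cl" and tcl: "tcl \<in> T" "tcl \<in> cl"
    and t: "t \<in> T" "t \<noteq> tcl" and p: "(p, t) \<in> F" "0 < \<mu> p"
    and q: "(q, t) \<in> F" "\<mu> q = 0" "q \<notin> X" and X: "tcl \<in> X" and s: "(tcl, s) \<in> F"
  shows "(s, q) \<notin> (unmarked_edges F \<mu> X)\<^sup>*"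
proof
  let ?E = "unmarked_edges F \<mu> X"
  assume "(s, q) \<in> ?E\<^sup>*"
  then obtain \<sigma> where \<sigma>: "elem_path ?E \<sigma>" "hd \<sigma> = s" "last \<sigma> = q"
    using rtrancl_imp_elem_path[of s q ?E] by blast
  have \<sigma>F: "is_path F \<sigma>" "\<sigma> \<noteq> []"
    using \<sigma>(1) is_path_mono[of _ \<sigma> F] unfolding elem_path_def is_path_def
    by (auto simp: unmarked_edges_def)
  have \<sigma>_nodes: "\<mu> z = 0 \<and> z \<notin> X" if "z \<in> set \<sigma>" for z
  proof -
    have "(z, q) \<in> ?E\<^sup>*"
      using is_path_rtrancl_last[OF _ that] \<sigma>(1,3) unfolding elem_path_def by simp
    then show ?thesis by (rule unmarked_edges_rtrancl[of _ q F \<mu> X, OF _ q(2,3)])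
  qed
  have "is_path F (tcl # \<sigma> @ [t])"
    using \<sigma>F \<sigma>(2,3) s q(1) by (simp add: is_path_Cons is_path_append[of \<sigma> "[t]"])
  moreover have "tcl \<notin> set \<sigma>" using \<sigma>_nodes X by blast
  ultimately have "\<mu> p \<le> sum_list (map \<mu> \<sigma>)"
    using perpetual_pre_place_le_tokens_from_tcl[OF sys pp tcl _ _ t p(1)] by simp
  moreover have "sum_list (map \<mu> \<sigma>) = 0" using \<sigma>_nodes by (simp add: sum_list_eq_0_iff)
  ultimately show False using p(2) by simp
qed

lemma perpetual_unmarked_en_q_avoiding_tcl:
  assumes sys: "tsystem P T F \<mu>" and pp: "perpetual P T F \<mu> cl" and tcl: "tcl \<in> T" "tcl \<in> cl"
    and t: "t \<in> T" and p: "(p, t) \<in> F" "0 < \<mu> p" and q: "(q, t) \<in> F" "\<mu> q = 0"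
  shows "\<exists>\<tau> \<delta>. (\<tau>, \<delta>) \<in> en_q T F \<mu> q t \<and> mnorm P \<mu> \<delta> = 0 \<and> tcl \<notin> set (butlast \<delta>)"
proof -
  have tn: "tnet P T F" using sys unfolding tsystem_def by simp
  have qX: "q \<notin> {t, tcl}"
    using tnet_edge_to_transition[OF tn q(1) t] t tcl(1) tnet_disjoint[OF tn] by blast
  have "reach T F \<mu> \<mu>" by (simp add: reach_def)
  then obtain \<mu>' where r: "reach T F \<mu> \<mu>'" and en: "enabled T F \<mu>' t"
    using pp t unfolding perpetual_def live_def by blast
  have "\<exists>\<tau> \<delta>. (\<tau>, \<delta>) \<in> en_q T F \<mu> q t \<and> mnorm P \<mu> \<delta> = 0 \<and> set (butlast \<delta>) \<inter> {t, tcl} = {}"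
  proof (rule reach_enabled_unmarked_en_q[OF sys _ _ q r en])
    fix v s assume "v \<in> {t, tcl}" "v \<noteq> t" "(v, s) \<in> F"
    then have "tcl \<noteq> t" "(tcl, s) \<in> F" by auto
    then show "(s, q) \<notin> (unmarked_edges F \<mu> {t, tcl})\<^sup>*"
      using perpetual_no_unmarked_path_from_tcl[OF sys pp tcl t _ p q qX] by simp
  qed (use t tcl(1) in auto)
  then show ?thesis by blast
qed

theorem proposition5p1:
  fixes P T :: "'n set" and F :: "('n \<times> 'n) set" and \<mu> :: "'n \<Rightarrow> nat"
  assumes "tsystem P T F \<mu>"
  shows "(\<forall>t q. t \<in> T \<and> (\<exists>\<mu>'. reach T F \<mu> \<mu>' \<and> enabled T F \<mu>' t) \<and>
             q \<in> preset F t \<and> \<mu> q = 0 \<longrightarrow>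
           (\<exists>\<tau> \<delta>. (\<tau>, \<delta>) \<in> en_q T F \<mu> q t \<and> mnorm P \<mu> \<delta> = 0))
       \<and> (\<forall>cl tcl. perpetual P T F \<mu> cl \<and> tcl \<in> T \<and> tcl \<in> cl \<longrightarrow>
           (\<forall>t p q. t \<in> T \<and> p \<in> preset F t \<and> \<mu> p = 1 \<and> q \<in> preset F t \<and> \<mu> q = 0 \<longrightarrow>
              (\<exists>\<tau> \<delta>. (\<tau>, \<delta>) \<in> en_q T F \<mu> q t \<and> mnorm P \<mu> \<delta> = 0 \<and>
                      tcl \<notin> set (butlast \<delta>)))
         \<and> (\<forall>\<delta>. elem_path F \<delta> \<and> tcl \<notin> set \<delta> \<longrightarrow> mnorm P \<mu> \<delta> \<le> 1))"
proof (intro conjI allI impI; elim conjE exE)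
  fix t q \<mu>'
  assume t: "t \<in> T" and r: "reach T F \<mu> \<mu>'" and en: "enabled T F \<mu>' t"
    and q: "q \<in> preset F t" "\<mu> q = 0"
  have "(q, t) \<in> F" using q(1) unfolding preset_def by simp
  have "\<exists>\<tau> \<delta>. (\<tau>, \<delta>) \<in> en_q T F \<mu> q t \<and> mnorm P \<mu> \<delta> = 0 \<and> set (butlast \<delta>) \<inter> {t} = {}"
    by (rule reach_enabled_unmarked_en_q[OF assms _ _ \<open>(q, t) \<in> F\<close> q(2) r en]) (use t in simp_all)
  then show "\<exists>\<tau> \<delta>. (\<tau>, \<delta>) \<in> en_q T F \<mu> q t \<and> mnorm P \<mu> \<delta> = 0" by blast
next
  fix cl tcl t p q
  assume "perpetual P T F \<mu> cl" "tcl \<in> T" "tcl \<in> cl"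
    and "t \<in> T" "p \<in> preset F t" "\<mu> p = 1" "q \<in> preset F t" "\<mu> q = 0"
  then show "\<exists>\<tau> \<delta>. (\<tau>, \<delta>) \<in> en_q T F \<mu> q t \<and> mnorm P \<mu> \<delta> = 0 \<and> tcl \<notin> set (butlast \<delta>)"
    using perpetual_unmarked_en_q_avoiding_tcl[OF assms] unfolding preset_def by simp
next
  fix cl tcl \<delta>
  assume "perpetual P T F \<mu> cl" "tcl \<in> T" "tcl \<in> cl" "elem_path F \<delta>" "tcl \<notin> set \<delta>"
  then show "mnorm P \<mu> \<delta> \<le> 1" by (rule perpetual_elem_path_mnorm_le_1[OF assms])
qed

end
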